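(* Let $n\ge 3$ be an integer, let $\Delta_n=\{x=(x_1,\dots,x_n)\in\mathbb{R}^n : x_i\ge 0 \text{ for all } i,\ x_1+\cdots+x_n=1\}$ be the probability simplex, and let $u=(\tfrac1n,\dots,\tfrac1n)\in\Delta_n$. For every $p\in\Delta_n\setminus\{u\}$ there are unique points $a(p),b(p)\in\Delta_n$ such that $\{u,p\}\subseteq[a(p),b(p)]$ and $\|a(p)-b(p)\|$ is maximal among all segments in $\Delta_n$ containing $u$ and $p$ (here $a(p)$ is the endpoint on the side of $u$ opposite to $p$, and $b(p)$ the endpoint on the side of $p$). Then the maximum value of $$\max_{p\in\Delta_n\setminus\{u\}} \frac{\langle a(p),b(p)\rangle}{\|a(p)\|\,\|b(p)\|}$$ is $\dfrac{n-2}{n+2}$, and a pair realizing this maximum is $a^*=\tfrac1n(2,1,1,\dots,1,0)$, $b^*=\tfrac1n(0,1,1,\dots,1,2)$. Consequently, the minimal angle spread, i.e. the minimum over $p\in\Delta_n\setminus\{u\}$ of the angle $\arccos\big(\langle a(p),b(p)\rangle/(\|a(p)\|\|b(p)\|)\big)$, equals $\arccos\big(\tfrac{n-2}{n+2}\big)$.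
   Context: $\mathbb{R}^n$ carries the standard Euclidean inner product $\langle\cdot,\cdot\rangle$ and norm $\|\cdot\|$. For $a,b\in\mathbb{R}^n$, $[a,b]=\{(1-t)a+tb: t\in[0,1]\}$ denotes the closed line segment. The angle between nonzero vectors $a,b$ is $\measuredangle(a,b)=\arccos\big(\langle a,b\rangle/(\|a\|\|b\|)\big)$. *)

theory Defs
  imports "HOL-Analysis.Analysis"
begin

text \<open>Vectors in R^n are modelled as real^'n, with the index type 'n finite and
  linearly ordered, so that its least and greatest elements play the role of the
  coordinates 1 and n.\<close>

definition prob_simplex :: "(real ^ 'n::finite) set" where
  "prob_simplex = {x. (\<forall>i. 0 \<le> x $ i) \<and> (\<Sum>i\<in>UNIV. x $ i) = 1}"

definition unif :: "real ^ 'n::finite" where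
  "unif = (\<chi> i. 1 / real CARD('n))"

definition max_seg :: "real ^ 'n::finite \<Rightarrow> real ^ 'n \<Rightarrow> real ^ 'n \<Rightarrow> bool" where
  "max_seg p a b \<longleftrightarrow>
     a \<in> prob_simplex \<and> b \<in> prob_simplex \<and>
     {unif, p} \<subseteq> closed_segment a b \<and>
     unif \<in> closed_segment a p \<and> p \<in> closed_segment unif b \<and>
     (\<forall>c\<in>prob_simplex. \<forall>d\<in>prob_simplex.
        {unif, p} \<subseteq> closed_segment c d \<longrightarrow> norm (c - d) \<le> norm (a - b))"

definition cos_ab :: "real ^ 'n::finite \<Rightarrow> real ^ 'n \<Rightarrow> real" where
  "cos_ab a b = inner a b / (norm a * norm b)"

definition a_star :: "real ^ 'n::{finite,linorder}" where
  "a_star = (\<chi> i. (if i = Min UNIV then 2 else if i = Max UNIV then 0 else 1) / real CARD('n))"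

definition b_star :: "real ^ 'n::{finite,linorder}" where
  "b_star = (\<chi> i. (if i = Min UNIV then 0 else if i = Max UNIV then 2 else 1) / real CARD('n))"

end

theory Submission
  imports Defs
begin

(* Write v = p - u. Its coordinates sum to 0, so with alpha = max v_k > 0 and
   beta = - min v_k > 0 the point u + r v lies in the simplex exactly when
   -sigma <= r <= tau, where sigma = 1/(n alpha) and tau = 1/(n beta). A segment
   containing u and p lies on this line, so the maximal one is the whole chord
   a(p) = u - sigma v, b(p) = u + tau v.
   As u is orthogonal to v, with V = |v|^2 the cosine of the angle is
   (1/n - sigma tau V) / sqrt ((1/n + sigma^2 V) (1/n + tau^2 V)), which by AM-GM is at
   most (1/n - sigma tau V) / (1/n + sigma tau V) when positive. Since
   V >= alpha^2 + beta^2 >= 2 alpha beta we get sigma tau V >= 2/n^2, and the bound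
   becomes (n - 2)/(n + 2). Equality holds for p = b*, where v has exactly two nonzero
   coordinates, +1/n and -1/n. *)

lemma line_in_closed_segment_iff:
  fixes u v :: "'a::real_vector"
  assumes "v \<noteq> 0"
  shows "u + r *\<^sub>R v \<in> closed_segment (u + r0 *\<^sub>R v) (u + r1 *\<^sub>R v) \<longleftrightarrow> r \<in> closed_segment r0 r1"
proof -
  have "closed_segment (u + r0 *\<^sub>R v) (u + r1 *\<^sub>R v) = (\<lambda>r. u + r *\<^sub>R v) ` closed_segment r0 r1"
    using closed_segment_linear_image[of "\<lambda>r. r *\<^sub>R v" r0 r1]
    by (simp add: closed_segment_translation image_image bounded_linear.linear[OF bounded_linear_scaleR_left])
  moreover have "inj (\<lambda>r. u + r *\<^sub>R v)"
    using assms by (auto intro: injI)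
  ultimately show ?thesis
    by (metis inj_image_mem_iff)
qed

lemma closed_segment_on_line:
  fixes u v :: "'a::real_vector"
  assumes "u \<in> closed_segment c d" "u + v \<in> closed_segment c d" "v \<noteq> 0"
    and "x \<in> closed_segment c d"
  shows "\<exists>r. x = u + r *\<^sub>R v"
proof -
  have "collinear {u, x, u + v}"
    using assms by (intro collinear_subset[OF collinear_closed_segment]) auto
  then obtain r where "x = r *\<^sub>R u + (1 - r) *\<^sub>R (u + v)"
    using assms(3) by (auto simp: collinear_3_expand)
  then have "x = u + (1 - r) *\<^sub>R v"
    by (simp add: algebra_simps)
  then show ?thesis ..
qed

lemma norm_line_diff:
  fixes u v :: "'a::real_normed_vector"
  shows "norm ((u + r *\<^sub>R v) - (u + q *\<^sub>R v)) = \<bar>r - q\<bar> * norm v"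
  by (metis add_diff_cancel_left norm_scaleR scaleR_diff_left)

lemma sum_eq_0_ex_pos:
  fixes f :: "'a \<Rightarrow> real"
  assumes "finite A" "sum f A = 0" "k \<in> A" "f k \<noteq> 0"
  shows "\<exists>k\<in>A. 0 < f k"
proof (rule ccontr)
  assume "\<not> ?thesis"
  then have "\<forall>k\<in>A. f k \<le> 0" by auto
  then have "\<forall>k\<in>A. - f k = 0"
    using assms sum_nonneg_eq_0_iff[of A "\<lambda>k. - f k"] by (simp add: sum_negf)
  with assms show False
    by simp
qed

lemma inner_unif_sum_eq_0:
  assumes "(\<Sum>k\<in>UNIV. v $ k) = 0"
  shows "inner unif v = 0"
  using assms by (simp add: unif_def inner_vec_def sum_divide_distrib[symmetric])

lemma inner_unif_unif: "inner (unif :: real^'n::finite) unif = 1 / real CARD('n)"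
  by (simp add: unif_def inner_vec_def)

lemma cos_ab_unif_line:
  fixes v :: "real^'n::finite"
  defines "N \<equiv> real CARD('n)"
  assumes "(\<Sum>k\<in>UNIV. v $ k) = 0"
  shows "cos_ab (unif + r *\<^sub>R v) (unif + q *\<^sub>R v) =
    (1 / N + r * q * inner v v) / sqrt ((1 / N + r\<^sup>2 * inner v v) * (1 / N + q\<^sup>2 * inner v v))"
proof -
  have "inner (unif + r *\<^sub>R v) (unif + q *\<^sub>R v) = 1 / N + r * q * inner v v" for r q
    using inner_unif_sum_eq_0[OF assms(2)]
    by (simp add: N_def inner_add_left inner_add_right inner_commute inner_unif_unif)
  then show ?thesis
    by (simp add: cos_ab_def norm_eq_sqrt_inner real_sqrt_mult power2_eq_square)
qed

lemma unif_add_in_prob_simplex_iff: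
  fixes w :: "real^'n::finite"
  assumes "(\<Sum>k\<in>UNIV. w $ k) = 0"
  shows "unif + w \<in> prob_simplex \<longleftrightarrow> (\<forall>k. 0 \<le> 1 / real CARD('n) + w $ k)"
  using assms by (simp add: prob_simplex_def unif_def sum.distrib)

lemma cos_ab_ge_minus_one: "-1 \<le> cos_ab a b"
proof (cases "norm a * norm b = 0")
  case False
  then have "0 < norm a * norm b"
    by simp
  moreover have "- (norm a * norm b) \<le> inner a b"
    using Cauchy_Schwarz_ineq2[of a b] by linarith
  ultimately show ?thesis
    by (simp add: cos_ab_def field_simps)
qed (auto simp: cos_ab_def)

lemma quotient_le_max_zero:
  fixes x d e :: real
  assumes "e \<le> d" "0 < e"
  shows "x / d \<le> max 0 (x / e)"
proof (cases "x \<le> 0")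
  case True
  then show ?thesis
    using assms by (simp add: divide_nonpos_pos)
next
  case False
  then show ?thesis
    using assms by (simp add: divide_left_mono)
qed

lemma cos_chord_bound:
  fixes N s t V :: real
  assumes "2 \<le> N" "0 < s" "0 < t" "2 / N\<^sup>2 \<le> s * t * V"
  shows "(1 / N - s * t * V) / sqrt ((1 / N + s\<^sup>2 * V) * (1 / N + t\<^sup>2 * V)) \<le> (N - 2) / (N + 2)"
proof -
  define K Q where "K = 1 / N" and "Q = s * t * V"
  have "0 < K" "0 < Q"
    using assms by (auto simp: K_def Q_def intro: less_le_trans[of 0 "2 / N\<^sup>2"])
  have "(K + s\<^sup>2 * V) * (K + t\<^sup>2 * V) = (K + Q)\<^sup>2 + K * V * (s - t)\<^sup>2"
    by (simp add: Q_def power2_eq_square algebra_simps)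
  moreover have "0 < V"
    using zero_less_mult_pos[of "s * t" V] \<open>0 < Q\<close> assms(2,3) by (simp add: Q_def)
  then have "0 \<le> K * V * (s - t)\<^sup>2"
    using \<open>0 < K\<close> by simp
  ultimately have "K + Q \<le> sqrt ((K + s\<^sup>2 * V) * (K + t\<^sup>2 * V))"
    using \<open>0 < K\<close> \<open>0 < Q\<close> by (intro real_le_rsqrt) auto
  then have "(K - Q) / sqrt ((K + s\<^sup>2 * V) * (K + t\<^sup>2 * V)) \<le> max 0 ((K - Q) / (K + Q))"
    by (rule quotient_le_max_zero) (use \<open>0 < K\<close> \<open>0 < Q\<close> in simp)
  also have "\<dots> \<le> (N - 2) / (N + 2)"
  proof -
    have "2 * K \<le> N * Q"
      using assms(1,4) by (simp add: K_def Q_def power2_eq_square field_simps)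
    then have "(K - Q) * (N + 2) \<le> (N - 2) * (K + Q)"
      by (simp add: algebra_simps)
    then have "(K - Q) / (K + Q) \<le> (N - 2) / (N + 2)"
      using assms(1) \<open>0 < K\<close> \<open>0 < Q\<close> by (simp add: divide_simps)
    then show ?thesis
      using assms(1) by simp
  qed
  finally show ?thesis
    by (simp add: K_def Q_def)
qed

locale simplex_point =
  fixes p :: "real^'n::finite"
  assumes p_in_simplex: "p \<in> prob_simplex" and p_ne_unif: "p \<noteq> unif"
begin

definition dir :: "real^'n" where "dir = p - unif"
definition \<alpha> :: real where "\<alpha> = Max (range (($) dir))"
definition \<beta> :: real where "\<beta> = Max (range (\<lambda>k. - dir $ k))"
definition \<sigma> :: real where "\<sigma> = 1 / (real CARD('n) * \<alpha>)"
definition \<tau> :: real where "\<tau> = 1 / (real CARD('n) * \<beta>)"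
definition chord_a :: "real^'n" where "chord_a = unif + (- \<sigma>) *\<^sub>R dir"
definition chord_b :: "real^'n" where "chord_b = unif + \<tau> *\<^sub>R dir"

(* Oriented towards p: as a rewrite rule, p = unif + dir would loop, since every locale
   constant is applied to p. *)
lemma unif_plus_dir: "unif + dir = p"
  by (simp add: dir_def)

lemma sum_dir: "(\<Sum>k\<in>UNIV. dir $ k) = 0"
  using p_in_simplex by (simp add: dir_def prob_simplex_def unif_def sum_subtractf)

lemma dir_nonzero: "dir \<noteq> 0"
  using p_ne_unif by (simp add: dir_def)

lemma dir_le_alpha: "dir $ k \<le> \<alpha>"
  by (simp add: \<alpha>_def)

lemma alpha_attained: "\<exists>i. dir $ i = \<alpha>"
proof -
  have "\<alpha> \<in> range (($) dir)"
    unfolding \<alpha>_def by (rule Max_in) auto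
  then obtain i where "\<alpha> = dir $ i"
    by (rule rangeE)
  then show ?thesis
    by (intro exI[of _ i]) simp
qed

lemma minus_beta_le_dir: "- \<beta> \<le> dir $ k"
proof -
  have "- dir $ k \<le> \<beta>"
    unfolding \<beta>_def by (rule Max_ge) auto
  then show ?thesis
    by linarith
qed

lemma beta_attained: "\<exists>j. dir $ j = - \<beta>"
proof -
  have "\<beta> \<in> range (\<lambda>k. - dir $ k)"
    unfolding \<beta>_def by (rule Max_in) auto
  then obtain j where "\<beta> = - dir $ j"
    by (rule rangeE)
  then show ?thesis
    by (intro exI[of _ j]) simp
qed

lemma alpha_pos: "0 < \<alpha>"
proof -
  obtain k where "dir $ k \<noteq> 0"
    using dir_nonzero by (auto simp: vec_eq_iff)
  then obtain i where "0 < dir $ i"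
    using sum_eq_0_ex_pos[of UNIV "($) dir"] sum_dir by auto
  then show ?thesis
    using dir_le_alpha[of i] by linarith
qed

lemma beta_pos: "0 < \<beta>"
proof -
  obtain k where "- dir $ k \<noteq> 0"
    using dir_nonzero by (auto simp: vec_eq_iff)
  then obtain j where "0 < - dir $ j"
    using sum_eq_0_ex_pos[of UNIV "\<lambda>k. - dir $ k"] sum_dir by (auto simp: sum_negf)
  then show ?thesis
    using minus_beta_le_dir[of j] by linarith
qed

lemma sigma_alpha: "\<sigma> * \<alpha> = 1 / real CARD('n)"
  using alpha_pos by (simp add: \<sigma>_def)

lemma tau_beta: "\<tau> * \<beta> = 1 / real CARD('n)"
  using beta_pos by (simp add: \<tau>_def)

lemma sigma_pos: "0 < \<sigma>" and tau_pos: "0 < \<tau>"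
  using alpha_pos beta_pos by (simp_all add: \<sigma>_def \<tau>_def)

lemma line_coord_nonneg:
  assumes "- \<sigma> \<le> r" "r \<le> \<tau>"
  shows "0 \<le> 1 / real CARD('n) + r * dir $ k"
proof (cases "0 \<le> r")
  case True
  have "r * (- \<beta>) \<le> r * dir $ k"
    using True minus_beta_le_dir by (rule mult_left_mono[rotated])
  moreover have "r * \<beta> \<le> \<tau> * \<beta>"
    using assms(2) beta_pos by (intro mult_right_mono) auto
  ultimately show ?thesis
    using tau_beta by simp
next
  case False
  then have "r * \<alpha> \<le> r * dir $ k"
    by (intro mult_left_mono_neg dir_le_alpha) simp
  moreover have "- \<sigma> * \<alpha> \<le> r * \<alpha>"
    using assms(1) alpha_pos by (intro mult_right_mono) auto
  ultimately show ?thesis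
    using sigma_alpha by simp
qed

lemma line_in_simplex_iff: "unif + r *\<^sub>R dir \<in> prob_simplex \<longleftrightarrow> - \<sigma> \<le> r \<and> r \<le> \<tau>"
proof -
  have "unif + r *\<^sub>R dir \<in> prob_simplex \<longleftrightarrow> (\<forall>k. 0 \<le> 1 / real CARD('n) + r * dir $ k)"
    using sum_dir by (subst unif_add_in_prob_simplex_iff) (simp_all add: sum_distrib_left[symmetric])
  also have "\<dots> \<longleftrightarrow> - \<sigma> \<le> r \<and> r \<le> \<tau>"
  proof
    assume nonneg: "\<forall>k. 0 \<le> 1 / real CARD('n) + r * dir $ k"
    obtain i j where "dir $ i = \<alpha>" "dir $ j = - \<beta>"
      using alpha_attained beta_attained by blast
    then have "- \<sigma> * \<alpha> \<le> r * \<alpha>" and "r * \<beta> \<le> \<tau> * \<beta>"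
      using nonneg[rule_format, of i] nonneg[rule_format, of j] sigma_alpha tau_beta by auto
    then show "- \<sigma> \<le> r \<and> r \<le> \<tau>"
      using alpha_pos beta_pos mult_right_le_imp_le by blast
  qed (use line_coord_nonneg in blast)
  finally show ?thesis .
qed

lemma one_le_tau: "1 \<le> \<tau>"
  using p_in_simplex line_in_simplex_iff[of 1] by (simp add: unif_plus_dir)

lemma chord_a_in_simplex: "chord_a \<in> prob_simplex"
  and chord_b_in_simplex: "chord_b \<in> prob_simplex"
  using line_in_simplex_iff[of "- \<sigma>"] line_in_simplex_iff[of \<tau>] sigma_pos tau_pos
  unfolding chord_a_def chord_b_def by simp_all

lemma mem_segment_on_line:
  assumes "{unif, p} \<subseteq> closed_segment c d" "x \<in> closed_segment c d"
  shows "\<exists>r. x = unif + r *\<^sub>R dir"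
  using assms dir_nonzero by (intro closed_segment_on_line[of unif c d dir x]) (auto simp: dir_def)

lemma line_mem_segment_iff:
  "unif + r *\<^sub>R dir \<in> closed_segment (unif + r0 *\<^sub>R dir) (unif + r1 *\<^sub>R dir) \<longleftrightarrow>
    r \<in> closed_segment r0 r1"
  using dir_nonzero by (rule line_in_closed_segment_iff)

lemma norm_chord: "norm (chord_a - chord_b) = (\<sigma> + \<tau>) * norm dir"
  unfolding chord_a_def chord_b_def norm_line_diff using sigma_pos tau_pos by simp

lemma segment_le_chord:
  assumes "c \<in> prob_simplex" "d \<in> prob_simplex" "{unif, p} \<subseteq> closed_segment c d"
  shows "norm (c - d) \<le> norm (chord_a - chord_b)"
proof -
  obtain rc rd where c: "c = unif + rc *\<^sub>R dir" and d: "d = unif + rd *\<^sub>R dir"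
    using mem_segment_on_line[OF assms(3) ends_in_segment(1)]
      mem_segment_on_line[OF assms(3) ends_in_segment(2)] by blast
  have "\<bar>rc - rd\<bar> \<le> \<sigma> + \<tau>"
    using assms(1,2) line_in_simplex_iff by (auto simp: c d)
  then show ?thesis
    unfolding c d norm_line_diff norm_chord by (simp add: mult_right_mono)
qed

lemma max_seg_chord: "max_seg p chord_a chord_b"
proof -
  have "unif \<in> closed_segment chord_a chord_b"
    using line_mem_segment_iff[of 0 "- \<sigma>" \<tau>] sigma_pos tau_pos
    by (simp add: chord_a_def chord_b_def closed_segment_eq_real_ivl)
  moreover have "p \<in> closed_segment chord_a chord_b"
    using line_mem_segment_iff[of 1 "- \<sigma>" \<tau>] sigma_pos one_le_tau
    by (simp add: chord_a_def chord_b_def unif_plus_dir closed_segment_eq_real_ivl)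
  moreover have "unif \<in> closed_segment chord_a p"
    using line_mem_segment_iff[of 0 "- \<sigma>" 1] sigma_pos
    by (simp add: chord_a_def unif_plus_dir closed_segment_eq_real_ivl)
  moreover have "p \<in> closed_segment unif chord_b"
    using line_mem_segment_iff[of 1 0 \<tau>] one_le_tau
    by (simp add: chord_b_def unif_plus_dir closed_segment_eq_real_ivl)
  ultimately show ?thesis
    using chord_a_in_simplex chord_b_in_simplex segment_le_chord by (simp add: max_seg_def)
qed

lemma max_seg_imp_chord:
  assumes "max_seg p a b"
  shows "a = chord_a \<and> b = chord_b"
proof -
  have seg: "{unif, p} \<subseteq> closed_segment a b" and "unif \<in> closed_segment a p"
    and "a \<in> prob_simplex" "b \<in> prob_simplex"
    using assms by (simp_all add: max_seg_def)
  obtain ra rb where a: "a = unif + ra *\<^sub>R dir" and b: "b = unif + rb *\<^sub>R dir"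
    using mem_segment_on_line[OF seg ends_in_segment(1)]
      mem_segment_on_line[OF seg ends_in_segment(2)] by blast
  have "- \<sigma> \<le> ra" "ra \<le> \<tau>" "- \<sigma> \<le> rb" "rb \<le> \<tau>"
    using \<open>a \<in> prob_simplex\<close> \<open>b \<in> prob_simplex\<close> line_in_simplex_iff by (simp_all add: a b)
  moreover have "ra \<le> 0"
    using \<open>unif \<in> closed_segment a p\<close> line_mem_segment_iff[of 0 ra 1]
    by (simp add: a unif_plus_dir closed_segment_eq_real_ivl split: if_splits)
  moreover have "\<sigma> + \<tau> \<le> \<bar>ra - rb\<bar>"
  proof -
    have "norm (chord_a - chord_b) \<le> norm (a - b)"
      using assms chord_a_in_simplex chord_b_in_simplex max_seg_chord
      by (simp add: max_seg_def)
    then show ?thesis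
      unfolding a b norm_line_diff norm_chord using dir_nonzero by simp
  qed
  ultimately have "ra = - \<sigma>" "rb = \<tau>"
    using tau_pos by linarith+
  then show ?thesis
    by (simp add: a b chord_a_def chord_b_def)
qed

lemma max_seg_iff: "max_seg p a b \<longleftrightarrow> a = chord_a \<and> b = chord_b"
  using max_seg_chord max_seg_imp_chord by blast

lemma cos_chord_le:
  assumes "2 \<le> CARD('n)"
  shows "cos_ab chord_a chord_b \<le> (real CARD('n) - 2) / (real CARD('n) + 2)"
proof -
  obtain i j where i: "dir $ i = \<alpha>" and j: "dir $ j = - \<beta>"
    using alpha_attained beta_attained by blast
  have "i \<noteq> j"
    using i j alpha_pos beta_pos by auto
  have "(\<Sum>k\<in>{i, j}. dir $ k * dir $ k) \<le> (\<Sum>k\<in>UNIV. dir $ k * dir $ k)"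
    by (rule sum_mono2) auto
  then have "\<alpha>\<^sup>2 + \<beta>\<^sup>2 \<le> inner dir dir"
    using \<open>i \<noteq> j\<close> i j by (simp add: inner_vec_def power2_eq_square)
  then have "\<sigma> * \<tau> * (2 * \<alpha> * \<beta>) \<le> \<sigma> * \<tau> * inner dir dir"
    using sum_squares_bound[of \<alpha> \<beta>] sigma_pos tau_pos by (intro mult_left_mono) auto
  moreover have "\<sigma> * \<tau> * (2 * \<alpha> * \<beta>) = 2 * (\<sigma> * \<alpha>) * (\<tau> * \<beta>)"
    by (simp add: mult_ac)
  then have "\<sigma> * \<tau> * (2 * \<alpha> * \<beta>) = 2 / (real CARD('n))\<^sup>2"
    by (simp add: sigma_alpha tau_beta power2_eq_square)
  ultimately have "2 / (real CARD('n))\<^sup>2 \<le> \<sigma> * \<tau> * inner dir dir"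
    by simp
  then show ?thesis
    using cos_chord_bound[of "real CARD('n)" \<sigma> \<tau> "inner dir dir"] assms sigma_pos tau_pos
    unfolding chord_a_def chord_b_def cos_ab_unif_line[OF sum_dir] by simp
qed

end

lemma Min_UNIV_ne_Max_UNIV:
  assumes "2 \<le> CARD('n::{finite,linorder})"
  shows "Min (UNIV :: 'n set) \<noteq> Max UNIV"
proof
  assume eq: "Min (UNIV :: 'n set) = Max UNIV"
  have "k = Min UNIV" for k :: 'n
  proof (rule order_antisym)
    show "k \<le> Min UNIV"
      unfolding eq by simp
  qed simp
  then have "(UNIV :: 'n set) = {Min UNIV}"
    by auto
  then have "CARD('n) = card {Min (UNIV :: 'n set)}"
    by (rule arg_cong)
  with assms show False
    by simp
qed

lemma sum_UNIV_two_support: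
  fixes f :: "'a::finite \<Rightarrow> 'b::comm_monoid_add"
  assumes "x \<noteq> y" "\<And>k. k \<noteq> x \<Longrightarrow> k \<noteq> y \<Longrightarrow> f k = 0"
  shows "(\<Sum>k\<in>UNIV. f k) = f x + f y"
proof -
  have "(\<Sum>k\<in>UNIV. f k) = (\<Sum>k\<in>{x, y}. f k)"
    using assms(2) by (intro sum.mono_neutral_right) auto
  then show ?thesis
    using assms(1) by simp
qed

definition star_dir :: "real^'n::{finite,linorder}" where
  "star_dir = (\<chi> k. (if k = Max UNIV then 1 else if k = Min UNIV then -1 else 0) / real CARD('n))"

lemma sum_star_dir:
  assumes "2 \<le> CARD('n)"
  shows "(\<Sum>k\<in>UNIV. (star_dir :: real^'n::{finite,linorder}) $ k) = 0"
  using Min_UNIV_ne_Max_UNIV[OF assms]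
  by (subst sum_UNIV_two_support[of "Max UNIV" "Min UNIV"]) (auto simp: star_dir_def)

lemma inner_star_dir:
  assumes "2 \<le> CARD('n)"
  shows "inner (star_dir :: real^'n::{finite,linorder}) star_dir = 2 / (real CARD('n))\<^sup>2"
  using Min_UNIV_ne_Max_UNIV[OF assms] unfolding inner_vec_def
  by (subst sum_UNIV_two_support[of "Max UNIV" "Min UNIV"])
    (auto simp: star_dir_def power2_eq_square)

lemma b_star_eq:
  assumes "2 \<le> CARD('n)"
  shows "(b_star :: real^'n::{finite,linorder}) = unif + star_dir"
  using Min_UNIV_ne_Max_UNIV[OF assms]
  by (auto simp: vec_eq_iff b_star_def star_dir_def unif_def add_divide_distrib[symmetric])

lemma a_star_eq:
  assumes "2 \<le> CARD('n)"
  shows "(a_star :: real^'n::{finite,linorder}) = unif + (- 1) *\<^sub>R star_dir"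
  using Min_UNIV_ne_Max_UNIV[OF assms]
  by (auto simp: vec_eq_iff a_star_def star_dir_def unif_def diff_divide_distrib[symmetric])

(* In proofs the type is written (real, 'n) vec: the syntax real^'n would constrain 'n to
   the sort finite alone, clashing with the fixed sort {finite,linorder}. *)
lemma simplex_point_b_star:
  assumes "2 \<le> CARD('n)"
  shows "simplex_point (b_star :: real^'n::{finite,linorder})"
proof
  have "\<forall>k. 0 \<le> (b_star :: (real, 'n) vec) $ k"
    by (simp add: b_star_def)
  moreover have "(\<Sum>k\<in>UNIV. (b_star :: (real, 'n) vec) $ k) = 1"
    using sum_star_dir[OF assms] by (simp add: b_star_eq[OF assms] sum.distrib unif_def)
  ultimately show "(b_star :: (real, 'n) vec) \<in> prob_simplex"
    by (simp add: prob_simplex_def)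
  have "(star_dir :: (real, 'n) vec) $ Max UNIV \<noteq> 0"
    by (simp add: star_dir_def)
  then show "(b_star :: (real, 'n) vec) \<noteq> unif"
    by (auto simp: b_star_eq[OF assms])
qed

lemma max_seg_b_star:
  assumes "2 \<le> CARD('n)"
  shows "max_seg (b_star :: real^'n::{finite,linorder}) a_star b_star"
proof -
  interpret simplex_point "b_star :: (real, 'n) vec"
    using assms by (rule simplex_point_b_star)
  have dir: "dir = star_dir"
    by (metis add_diff_cancel_left' b_star_eq[OF assms] dir_def)
  have dir_nth: "dir $ k = (if k = Max UNIV then 1 else if k = Min UNIV then -1 else 0) / real CARD('n)" for k
    by (simp add: dir star_dir_def)
  have "\<alpha> = 1 / real CARD('n)"
    unfolding \<alpha>_def by (intro Max_eqI) (auto simp: dir_nth intro: range_eqI[of _ _ "Max UNIV"])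
  moreover have "\<beta> = 1 / real CARD('n)"
    unfolding \<beta>_def using Min_UNIV_ne_Max_UNIV[OF assms]
    by (intro Max_eqI) (auto simp: dir_nth intro: range_eqI[of _ _ "Min UNIV"])
  ultimately have "\<sigma> = 1" "\<tau> = 1"
    by (simp_all add: \<sigma>_def \<tau>_def)
  then have "chord_a = a_star" "chord_b = b_star"
    unfolding chord_a_def chord_b_def dir
    by (simp_all add: a_star_eq[OF assms] b_star_eq[OF assms])
  then show ?thesis
    using max_seg_chord by simp
qed

lemma cos_ab_a_star_b_star:
  assumes card: "2 \<le> CARD('n)"
  defines "N \<equiv> real CARD('n)"
  shows "cos_ab (a_star :: real^'n::{finite,linorder}) b_star = (N - 2) / (N + 2)"
proof -
  define V where "V = inner (star_dir :: (real, 'n) vec) star_dir"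
  have "0 < N"
    by (simp add: N_def)
  have "cos_ab (a_star :: (real, 'n) vec) b_star = (1 / N - V) / sqrt ((1 / N + V) * (1 / N + V))"
    using cos_ab_unif_line[OF sum_star_dir[OF card], of "- 1" 1]
    by (simp add: a_star_eq[OF card] b_star_eq[OF card] N_def V_def)
  also have "\<dots> = (1 / N - 2 / N\<^sup>2) / (1 / N + 2 / N\<^sup>2)"
    using \<open>0 < N\<close> by (simp add: V_def inner_star_dir[OF card] N_def)
  also have "\<dots> = ((N - 2) / N\<^sup>2) / ((N + 2) / N\<^sup>2)"
    using \<open>0 < N\<close> by (simp add: power2_eq_square diff_divide_distrib add_divide_distrib)
  also have "\<dots> = (N - 2) / (N + 2)"
    using \<open>0 < N\<close> by simp
  finally show ?thesis .
qed

theorem theorem1p1: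
  assumes "CARD('n::{finite,linorder}) \<ge> 3"
  defines "n \<equiv> real CARD('n)"
  shows "(\<forall>p::real^'n::{finite,linorder}. p \<in> prob_simplex - {unif} \<longrightarrow> (\<exists>!(a, b). max_seg p a b))
    \<and> (\<lambda>S m. m \<in> S \<and> (\<forall>x\<in>S. x \<le> m)) {cos_ab a b | a b (p::real^'n::{finite,linorder}). p \<in> prob_simplex - {unif} \<and> max_seg p a b}
        ((n - 2) / (n + 2))
    \<and> (\<exists>p::real^'n::{finite,linorder}. p \<in> prob_simplex - {unif} \<and> max_seg p a_star b_star)
    \<and> cos_ab (a_star::real^'n::{finite,linorder}) b_star = (n - 2) / (n + 2)
    \<and> (\<lambda>S m. m \<in> S \<and> (\<forall>x\<in>S. m \<le> x)) {arccos (cos_ab a b) | a b (p::real^'n::{finite,linorder}). p \<in> prob_simplex - {unif} \<and> max_seg p a b}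
        (arccos ((n - 2) / (n + 2)))"
proof -
  have card: "2 \<le> CARD('n)"
    using assms(1) by simp
  have point: "simplex_point p" if "p \<in> prob_simplex - {unif}" for p :: "(real, 'n) vec"
    using that by unfold_locales auto
  have unique: "\<exists>!(a, b). max_seg p a b" if "p \<in> prob_simplex - {unif}" for p :: "(real, 'n) vec"
    using simplex_point.max_seg_iff[OF point[OF that]] by auto
  have cos_le: "cos_ab a b \<le> (n - 2) / (n + 2)"
    if "p \<in> prob_simplex - {unif}" "max_seg p a b" for p a b :: "(real, 'n) vec"
    using simplex_point.max_seg_iff[OF point[OF that(1)]] that(2)
      simplex_point.cos_chord_le[OF point[OF that(1)] card] by (simp add: n_def)
  have arccos_ge: "arccos ((n - 2) / (n + 2)) \<le> arccos (cos_ab a b)"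
    if "p \<in> prob_simplex - {unif}" "max_seg p a b" for p a b :: "(real, 'n) vec"
    using arccos_le_arccos[OF cos_ab_ge_minus_one cos_le[OF that]] assms(1) by (simp add: n_def)
  have star: "(b_star :: (real, 'n) vec) \<in> prob_simplex - {unif}"
    "max_seg (b_star :: (real, 'n) vec) a_star b_star"
    "cos_ab (a_star :: (real, 'n) vec) b_star = (n - 2) / (n + 2)"
    using simplex_point_b_star[OF card] max_seg_b_star[OF card] cos_ab_a_star_b_star[OF card]
    by (auto simp: simplex_point_def n_def)
  show ?thesis
    apply (intro conjI)
    subgoal using unique by blast
    subgoal using star by (intro CollectI exI conjI) (rule star(3)[symmetric] star(1) star(2))+
    subgoal using cos_le by blast
    subgoal using star by blast
    subgoal using star by blast
    subgoal using star by (intro CollectI exI conjI) (rule arg_cong[OF star(3)[symmetric]] star(1) star(2))+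
    subgoal using arccos_ge by blast
    done
qed

end
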